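(* For every integer $k\geqslant 1$, there exists a finite word $W$ over a $4$-letter alphabet with exactly $k$ distinct reducts, i.e., $r(W)=k$.
   Context: A square is a finite non-empty word of the form $XX$; a word is square-free if it has no square factor. A square reduction replaces a word $UXXV$ (with $X$ non-empty) by $UXV$. A reduct of $W$ is any square-free word obtainable from $W$ by a finite sequence of square reductions, and $r(W)$ is the number of distinct reducts of $W$. *)

theory Defs
  imports Main
begin

definition is_square :: "'a list \<Rightarrow> bool" where
  "is_square w \<longleftrightarrow> (\<exists>X. X \<noteq> [] \<and> w = X @ X)"

definition square_free :: "'a list \<Rightarrow> bool" where
  "square_free w \<longleftrightarrow> \<not> (\<exists>U X V. X \<noteq> [] \<and> w = U @ X @ X @ V)"

definition sq_step :: "'a list \<Rightarrow> 'a list \<Rightarrow> bool" where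
  "sq_step w w' \<longleftrightarrow> (\<exists>U X V. X \<noteq> [] \<and> w = U @ X @ X @ V \<and> w' = U @ X @ V)"

definition reducts :: "'a list \<Rightarrow> 'a list set" where
  "reducts W = {w. sq_step\<^sup>*\<^sup>* W w \<and> square_free w}"

definition r :: "'a list \<Rightarrow> nat" where
  "r W = card (reducts W)"

end

theory Submission
  imports Defs "HOL-Library.Sublist"
begin

text \<open>
  Let W be the word [0] 3 Y_0 3 Y_1 3 ... 3 Y_m over {0,1,2,3}, where the letter 3 separates blocks
  that are factors of the square-free ternary Thue-Morse word vtm: Y_0 = 21 and
  Y_i = vtm[0, 4^i - 1) 1 for i \<ge> 1. Since the blocks are distinct and square-free, a square
  must contain exactly one separator, and reducing it deletes one whole block B whose neighbours
  L, R satisfy B = Q P with P a suffix of L and Q a prefix of R. For our blocks this happens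
  exactly when B = Y_i is followed by some Y_j with j > i, and either i = 0 or B is not
  preceded by the block [0]. Hence the reductions keep Y_m and the order of the blocks, and
  the square-free words reachable from W are [0] 3 Y_m and [0] 3 Y_i 3 Y_m for 1 \<le> i < m:
  exactly m reducts.
\<close>

section \<open>The Thue-Morse word\<close>

fun thue_morse :: "nat \<Rightarrow> bool" where
  "thue_morse n = (if n = 0 then False else thue_morse (n div 2) \<noteq> odd n)"

declare thue_morse.simps [simp del]

lemma thue_morse_0 [simp]: "\<not> thue_morse 0"
  by (simp add: thue_morse.simps)

lemma thue_morse_double [simp]: "thue_morse (2 * n) = thue_morse n"
  by (subst thue_morse.simps) simp

lemma thue_morse_Suc_double [simp]: "thue_morse (Suc (2 * n)) = (\<not> thue_morse n)"
  by (subst thue_morse.simps) simp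

lemma thue_morse_div2: "thue_morse n = (thue_morse (n div 2) \<noteq> odd n)"
  by (cases "n = 0") (simp_all add: thue_morse.simps)

lemma thue_morse_even_Suc: "even n \<Longrightarrow> thue_morse (Suc n) \<noteq> thue_morse n"
  by (auto elim: evenE)

lemma thue_morse_overlap_halve:
  assumes "\<forall>j \<le> 2 * q. thue_morse (i + j) = thue_morse (i + j + 2 * q)"
  shows "\<forall>j \<le> q. thue_morse (i div 2 + j) = thue_morse (i div 2 + j + q)"
proof (intro allI impI)
  fix j assume "j \<le> q"
  have d: "(i + 2 * j) div 2 = i div 2 + j" "(i + 2 * j + 2 * q) div 2 = i div 2 + j + q"
    by simp_all
  have "thue_morse (i + 2 * j) = (thue_morse (i div 2 + j) \<noteq> odd i)"
    using thue_morse_div2 [of "i + 2 * j", unfolded d] by simp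
  moreover have "thue_morse (i + 2 * j + 2 * q) = (thue_morse (i div 2 + j + q) \<noteq> odd i)"
    using thue_morse_div2 [of "i + 2 * j + 2 * q", unfolded d] by simp
  moreover have "thue_morse (i + 2 * j) = thue_morse (i + 2 * j + 2 * q)"
    using assms \<open>j \<le> q\<close> by simp
  ultimately show "thue_morse (i div 2 + j) = thue_morse (i div 2 + j + q)" by blast
qed

lemma alternating_bool_seq:
  assumes "\<forall>j < n. f (i + j) \<noteq> f (i + Suc j)"
  shows "f (i + n) = (f i \<noteq> odd n)"
  using assms by (induction n) auto

lemma thue_morse_overlap_free:
  assumes "0 < p"
  shows "\<exists>j \<le> p. thue_morse (i + j) \<noteq> thue_morse (i + j + p)"
  using assms
proof (induction p arbitrary: i rule: less_induct)
  case (less p)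
  show ?case
  proof (rule ccontr)
    assume "\<not> ?case"
    then have overlap: "\<forall>j \<le> p. thue_morse (i + j) = thue_morse (i + j + p)" by auto
    show False
    proof (cases "even p")
      case True
      then obtain q where "p = 2 * q" by blast
      with less.prems have "q < p" "0 < q" by simp_all
      then show False
        using less.IH [of q "i div 2"] overlap thue_morse_overlap_halve [of q i] \<open>p = 2 * q\<close> by auto
    next
      case False
      \<comment> \<open>An odd period forces alternation on the whole window, which contradicts
          the overlap at its two ends.\<close>
      have "thue_morse (i + j) \<noteq> thue_morse (i + Suc j)" if "j < p" for j
      proof (cases "even (i + j)")
        case True
        then show ?thesis using thue_morse_even_Suc by simp
      next
        case odd: False
        have "thue_morse (Suc (i + j + p)) \<noteq> thue_morse (i + j + p)"
          using odd False by (intro thue_morse_even_Suc) simp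
        then show ?thesis
          using overlap [rule_format, of j] overlap [rule_format, of "Suc j"] that by simp
      qed
      then have "thue_morse (i + p) = (thue_morse i \<noteq> odd p)"
        by (intro alternating_bool_seq) blast
      then show False using overlap [rule_format, of 0] False by simp
    qed
  qed
qed

lemma thue_morse_shift:
  "j < 2 ^ n \<Longrightarrow> thue_morse (a * 2 ^ n + j) = (thue_morse a \<noteq> thue_morse j)"
proof (induction n arbitrary: j)
  case 0
  then show ?case by simp
next
  case (Suc n)
  have "(a * 2 ^ Suc n + j) div 2 = a * 2 ^ n + j div 2" by simp
  moreover have "odd (a * 2 ^ Suc n + j) = odd j" by simp
  moreover have "j div 2 < 2 ^ n" using Suc.prems by simp
  ultimately show ?case
    using Suc.IH thue_morse_div2 [of "a * 2 ^ Suc n + j"] thue_morse_div2 [of j] by metis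
qed

lemma thue_morse_pow2: "thue_morse (2 ^ n)"
  using thue_morse_shift [of 0 n 1] by (simp add: thue_morse.simps)

lemma thue_morse_pow2_minus_1: "thue_morse (2 ^ n - 1) = odd n"
proof (induction n)
  case (Suc n)
  have "(2::nat) ^ Suc n - 1 = Suc (2 * (2 ^ n - 1))"
    using one_le_power [of "2::nat" n] by (simp only: power_Suc) linarith
  with Suc show ?case by simp
qed simp

section \<open>The square-free ternary Thue-Morse word\<close>

definition square_free_seq :: "(nat \<Rightarrow> 'a) \<Rightarrow> bool" where
  "square_free_seq f \<longleftrightarrow> (\<forall>i L. 0 < L \<longrightarrow> (\<exists>j < L. f (i + j) \<noteq> f (i + L + j)))"

lemma square_free_map_upt:
  assumes "square_free_seq f"
  shows "square_free (map f [a..<b])"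
  unfolding square_free_def
proof
  assume "\<exists>U X V. X \<noteq> [] \<and> map f [a..<b] = U @ X @ X @ V"
  then obtain U X V where "X \<noteq> []" and w: "map f [a..<b] = U @ X @ X @ V" by blast
  define i L where "i = a + length U" and "L = length X"
  have len: "b - a = length U + L + L + length V"
    using arg_cong [OF w, of length] by (simp add: L_def)
  have "f (i + j) = f (i + L + j)" if "j < L" for j
  proof -
    have "f (i + j) = map f [a..<b] ! (length U + j)"
      using len that by (simp add: i_def ac_simps)
    also have "\<dots> = X ! j" using w that by (simp add: L_def nth_append)
    also have "\<dots> = map f [a..<b] ! (length U + L + j)" using w that by (simp add: L_def nth_append)
    also have "\<dots> = f (i + L + j)" using len that by (simp add: i_def ac_simps)
    finally show ?thesis .
  qed
  moreover have "0 < L" using \<open>X \<noteq> []\<close> by (simp add: L_def)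
  ultimately show False using assms unfolding square_free_seq_def by blast
qed

definition vtm :: "nat \<Rightarrow> nat" where
  "vtm n = of_bool (thue_morse (Suc n)) + 1 - of_bool (thue_morse n)"

lemma vtm_less_3: "vtm n < 3"
  by (simp add: vtm_def)

lemma int_vtm: "int (vtm n) = of_bool (thue_morse (Suc n)) + 1 - of_bool (thue_morse n)"
  by (simp add: vtm_def)

lemma square_free_seq_vtm: "square_free_seq vtm"
  unfolding square_free_seq_def
proof (intro allI impI)
  fix i L :: nat assume "0 < L"
  show "\<exists>j < L. vtm (i + j) \<noteq> vtm (i + L + j)"
  proof (rule ccontr)
    assume "\<not> ?thesis"
    then have square: "\<forall>j < L. vtm (i + j) = vtm (i + L + j)" by simp
    define \<delta> where "\<delta> j = (of_bool (thue_morse (i + L + j)) - of_bool (thue_morse (i + j)) :: int)" for j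
    \<comment> \<open>Equal letters of vtm mean equal increments of the Thue-Morse word, so the two
        halves of the square differ on the Thue-Morse word by a constant.\<close>
    have const: "\<delta> j = \<delta> 0" if "j \<le> L" for j
      using that
    proof (induction j)
      case (Suc j)
      then have "int (vtm (i + j)) = int (vtm (i + L + j))" using square by simp
      then have "\<delta> (Suc j) = \<delta> j" unfolding int_vtm \<delta>_def by simp
      with Suc show ?case by simp
    qed simp
    show False
    proof (cases "\<delta> 0 = 0")
      case True
      have "thue_morse (i + j) = thue_morse (i + j + L)" if "j \<le> L" for j
        using const [OF that] True by (simp add: \<delta>_def of_bool_eq_iff ac_simps)
      then have "\<forall>j \<le> L. thue_morse (i + j) = thue_morse (i + j + L)" by blast
      then show False using thue_morse_overlap_free [OF \<open>0 < L\<close>, of i] by blast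
    next
      case False
      \<comment> \<open>The Thue-Morse word would step by the same nonzero amount from i to i + L
          and from i + L to i + 2 L, leaving {0, 1}.\<close>
      then show False using const [of L] by (auto simp: \<delta>_def of_bool_def split: if_splits)
    qed
  qed
qed

lemma vtm_pow4_minus_1: "vtm (4 ^ i - 1) = 2"
proof -
  have "(4::nat) ^ i = 2 ^ (2 * i)" by (simp add: power_mult)
  then show ?thesis
    using thue_morse_pow2 [of "2 * i"] thue_morse_pow2_minus_1 [of "2 * i"]
    by (simp add: vtm_def)
qed

text \<open>The Thue-Morse letters at 5 and 6 are both 0, so on [5 N, 6 N] with N = 4^i the Thue-Morse
  word repeats its prefix of length N, followed by a 0 where the prefix would continue with a 1.\<close>

lemma vtm_factor:
  assumes "1 \<le> i"
  shows "map vtm [5 * 4 ^ i..<6 * 4 ^ i] = map vtm [0..<4 ^ i - 1] @ [1]"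
proof -
  define N :: nat where "N = 4 ^ i"
  have N: "N = 2 ^ (2 * i)" "1 \<le> N" by (simp_all add: N_def power_mult)
  have tm: "thue_morse (5 * N + j) = thue_morse j" if "j < N" for j
    using thue_morse_shift [of j "2 * i" 5] that N by (simp add: thue_morse.simps mult.commute)
  have "\<not> thue_morse (6 * N)"
    using thue_morse_shift [of 0 "2 * i" 6] N by (simp add: thue_morse.simps mult.commute)
  moreover have "\<not> thue_morse (6 * N - 1)"
    using tm [of "N - 1"] thue_morse_pow2_minus_1 [of "2 * i"] N by (simp add: algebra_simps)
  ultimately have last: "vtm (5 * N + (N - 1)) = 1"
    using N by (simp add: vtm_def algebra_simps)
  have init: "vtm (5 * N + j) = vtm j" if "j < N - 1" for j
    using tm [of j] tm [of "Suc j"] that by (simp add: vtm_def)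
  show ?thesis
    unfolding N_def [symmetric]
  proof (rule nth_equalityI)
    fix j assume "j < length (map vtm [5 * N..<6 * N])"
    then have "j < N" by simp
    show "map vtm [5 * N..<6 * N] ! j = (map vtm [0..<N - 1] @ [1]) ! j"
    proof (cases "j < N - 1")
      case False
      then have "j = N - 1" using \<open>j < N\<close> by simp
      then show ?thesis using last N(2) by (simp add: nth_append)
    qed (use init \<open>j < N\<close> in \<open>simp add: nth_append\<close>)
  qed (use N in simp)
qed

section \<open>Square reductions across a separator\<close>

lemma square_free_iff_no_sq_step: "square_free w \<longleftrightarrow> (\<forall>w'. \<not> sq_step w w')"
  unfolding square_free_def sq_step_def by blast

fun split_on :: "'a \<Rightarrow> 'a list \<Rightarrow> 'a list list" where
  "split_on c [] = [[]]"
| "split_on c (x # xs) =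
    (if x = c then [] # split_on c xs else (x # hd (split_on c xs)) # tl (split_on c xs))"

fun join_with :: "'a \<Rightarrow> 'a list list \<Rightarrow> 'a list" where
  "join_with c [] = []"
| "join_with c [b] = b"
| "join_with c (b # d # bs) = b @ c # join_with c (d # bs)"

lemma split_on_not_Nil [simp]: "split_on c xs \<noteq> []"
  by (cases xs) auto

lemma split_on_append:
  "split_on c (xs @ ys) =
    butlast (split_on c xs) @ [last (split_on c xs) @ hd (split_on c ys)] @ tl (split_on c ys)"
proof (induction xs)
  case (Cons x xs)
  obtain b bs where "split_on c xs = b # bs" by (cases "split_on c xs") auto
  with Cons show ?case by (cases bs) auto
qed simp

lemma split_on_append_sep: "split_on c (xs @ c # ys) = split_on c xs @ split_on c ys"
  using split_on_append [of c xs "c # ys"] by simp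

lemma split_on_free: "c \<notin> set xs \<Longrightarrow> split_on c xs = [xs]"
  by (induction xs) auto

lemma join_with_Cons: "bs \<noteq> [] \<Longrightarrow> join_with c (b # bs) = b @ c # join_with c bs"
  by (cases bs) auto

lemma join_with_append:
  "bs1 \<noteq> [] \<Longrightarrow> bs2 \<noteq> [] \<Longrightarrow> join_with c (bs1 @ bs2) = join_with c bs1 @ c # join_with c bs2"
  by (induction bs1 rule: join_with.induct) (auto simp: join_with_Cons)

lemma split_on_join_with:
  "\<forall>b \<in> set bs. c \<notin> set b \<Longrightarrow> bs \<noteq> [] \<Longrightarrow> split_on c (join_with c bs) = bs"
  by (induction bs rule: join_with.induct) (simp_all add: split_on_append_sep split_on_free)

lemma join_with_split_on: "join_with c (split_on c w) = w"
proof (induction w)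
  case (Cons x xs)
  have "join_with c ((x # b) # bs) = x # join_with c (b # bs)" for b bs
    by (cases bs) auto
  with Cons show ?case
    by (cases "split_on c xs") (auto simp: join_with_Cons)
qed simp

lemma prefix_hd_join_with: "bs \<noteq> [] \<Longrightarrow> prefix (hd bs) (join_with c bs)"
  by (induction bs rule: join_with.induct) auto

lemma suffix_last_join_with: "bs \<noteq> [] \<Longrightarrow> suffix (last bs) (join_with c bs)"
  by (induction bs rule: join_with.induct) (auto simp: suffix_def)

lemma set_join_with: "set (join_with c bs) \<subseteq> insert c (\<Union>b \<in> set bs. set b)"
  by (induction bs rule: join_with.induct) auto

text \<open>In the word L c B c R the factor (P c Q)(P c Q) is a square exactly when B = Q P
  with P a suffix of L and Q a prefix of R; reducing it deletes the block B.\<close>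

definition removable :: "'a list \<Rightarrow> 'a list \<Rightarrow> 'a list \<Rightarrow> bool" where
  "removable L B R \<longleftrightarrow> (\<exists>Q P. B = Q @ P \<and> suffix P L \<and> prefix Q R)"

lemma sq_step_join_with_removable:
  assumes "bs1 \<noteq> []" "bs2 \<noteq> []" "removable (last bs1) B (hd bs2)"
  shows "sq_step (join_with c (bs1 @ B # bs2)) (join_with c (bs1 @ bs2))"
proof -
  obtain Q P where B: "B = Q @ P" and "suffix P (last bs1)" and "prefix Q (hd bs2)"
    using assms(3) unfolding removable_def by blast
  then have "suffix P (join_with c bs1)" "prefix Q (join_with c bs2)"
    using suffix_last_join_with [OF assms(1)] prefix_hd_join_with [OF assms(2)]
    by (meson suffix_order.trans prefix_order.trans)+
  then obtain U V where "join_with c bs1 = U @ P" "join_with c bs2 = Q @ V"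
    by (auto simp: suffix_def prefix_def)
  with assms(1,2) B show ?thesis
    unfolding sq_step_def by (intro exI [of _ U] exI [of _ "P @ c # Q"] exI [of _ V])
      (simp add: join_with_append join_with_Cons)
qed

lemma split_on_sublist_block:
  assumes "c \<notin> set Z"
  shows "\<exists>b \<in> set (split_on c (U @ Z @ R)). sublist Z b"
proof -
  have "split_on c (U @ Z @ R) =
      butlast (split_on c U) @ [last (split_on c U) @ Z @ hd (split_on c R)] @ tl (split_on c R)"
    using split_on_append [of c U "Z @ R"] split_on_append [of c Z R] assms
    by (simp add: split_on_free)
  then show ?thesis by (force simp: sublist_def)
qed

lemma square_crosses_one_separator:
  assumes distinct: "distinct (split_on c w)"
    and square_free: "\<forall>b \<in> set (split_on c w). square_free b"
    and w: "w = U @ X @ X @ R" and "X \<noteq> []"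
  obtains P Q where "X = P @ c # Q" "c \<notin> set P" "c \<notin> set Q"
proof (cases "c \<in> set X")
  case False
  then obtain b where "b \<in> set (split_on c w)" "sublist (X @ X) b"
    using split_on_sublist_block [of c "X @ X" U R] w by auto
  then have "\<not> square_free b"
    using \<open>X \<noteq> []\<close> by (auto simp: square_free_def sublist_def)
  with square_free \<open>b \<in> set (split_on c w)\<close> show ?thesis by blast
next
  case True
  then obtain P Q where X: "X = P @ c # Q" and "c \<notin> set P"
    by (meson split_list_first)
  moreover have "c \<notin> set Q"
  proof
    assume "c \<in> set Q"
    then obtain M Q' where "Q = M @ c # Q'" by (meson split_list_last)
    \<comment> \<open>Then the blocks of M occur twice among the blocks of w.\<close>
    then have "w = (U @ P) @ c # M @ c # (Q' @ P) @ c # M @ c # Q' @ R"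
      using w X by simp
    then have "split_on c w = split_on c (U @ P) @ split_on c M @ split_on c (Q' @ P)
        @ split_on c M @ split_on c (Q' @ R)"
      by (simp only: split_on_append_sep)
    with distinct show False by (cases "split_on c M") auto
  qed
  ultimately show ?thesis by (rule that)
qed

lemma sq_step_join_with_cases:
  assumes "\<forall>b \<in> set bs. c \<notin> set b" "distinct bs" "\<forall>b \<in> set bs. square_free b"
    and "sq_step (join_with c bs) w"
  obtains bs1 B bs2 where "bs = bs1 @ B # bs2" "bs1 \<noteq> []" "bs2 \<noteq> []"
    "removable (last bs1) B (hd bs2)" "w = join_with c (bs1 @ bs2)"
proof -
  obtain U X R where "X \<noteq> []" and sq: "join_with c bs = U @ X @ X @ R" and w: "w = U @ X @ R"
    using assms(4) unfolding sq_step_def by blast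
  then have "bs \<noteq> []" by auto
  then have split_bs: "split_on c (join_with c bs) = bs"
    using assms(1) by (simp add: split_on_join_with)
  obtain P Q where X: "X = P @ c # Q" and P: "c \<notin> set P" and Q: "c \<notin> set Q"
    using square_crosses_one_separator [of c "join_with c bs"] assms(2,3) sq \<open>X \<noteq> []\<close>
    unfolding split_bs by blast
  define bs1 bs2 where "bs1 = split_on c (U @ P)" and "bs2 = split_on c (Q @ R)"
  have QP: "c \<notin> set (Q @ P)" using P Q by simp
  have "join_with c bs = (U @ P) @ c # ((Q @ P) @ c # (Q @ R))" using sq X by simp
  then have "split_on c (join_with c bs) = bs1 @ (Q @ P) # bs2"
    unfolding bs1_def bs2_def
    by (simp only: split_on_append_sep split_on_free [OF QP] append_Cons append_Nil)
  then have "bs = bs1 @ (Q @ P) # bs2" by (simp only: split_bs)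
  moreover have "w = join_with c (bs1 @ bs2)"
  proof -
    have "w = (U @ P) @ c # (Q @ R)" using w X by simp
    then have "split_on c w = bs1 @ bs2" by (simp only: bs1_def bs2_def split_on_append_sep)
    then show ?thesis using join_with_split_on [of c w] by simp
  qed
  moreover have "removable (last bs1) (Q @ P) (hd bs2)"
    using split_on_append [of c U P] split_on_append [of c Q R] P Q
    unfolding removable_def bs1_def bs2_def
    by (intro exI [of _ Q] exI [of _ P]) (simp add: split_on_free suffix_def)
  ultimately show ?thesis using that by (simp add: bs1_def bs2_def)
qed

section \<open>Blocks of the ternary Thue-Morse word\<close>

definition block :: "nat \<Rightarrow> nat list" where
  "block i = (if i = 0 then [2, 1] else map vtm [0..<4 ^ i - 1] @ [1])"

definition block_word :: "nat list \<Rightarrow> nat list" where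
  "block_word xs = join_with 3 ([0] # map block xs)"

lemma length_block: "length (block i) = (if i = 0 then 2 else 4 ^ i)"
  by (simp add: block_def)

lemma set_block: "set (block i) \<subseteq> {0..<3}"
  using vtm_less_3 by (auto simp: block_def)

lemma inj_block: "inj block"
proof (rule injI)
  fix i j assume "block i = block j"
  then have "length (block i) = length (block j)" by simp
  moreover have "(4::nat) ^ n \<noteq> 2" for n
    by (cases n) auto
  ultimately show "i = j" by (auto simp: length_block split: if_splits)
qed

lemma block_0_eq: "block 0 = map vtm [0..<2]"
  by (simp add: block_def vtm_def thue_morse.simps upt_rec)

lemma square_free_block: "square_free (block i)"
proof (cases "i = 0")
  case False
  then have "block i = map vtm [5 * 4 ^ i..<6 * 4 ^ i]" by (simp add: block_def vtm_factor)
  then show ?thesis by (simp add: square_free_map_upt square_free_seq_vtm)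
qed (simp add: block_0_eq square_free_map_upt square_free_seq_vtm)

lemma prefix_block:
  assumes "1 \<le> k" "a \<le> 4 ^ k - 1"
  shows "prefix (map vtm [0..<a]) (block k)"
proof -
  have "[0..<4 ^ k - 1] = [0..<a] @ [a..<4 ^ k - 1]"
    using assms(2) by (metis le_add_diff_inverse upt_add_eq_append zero_le)
  with assms(1) show ?thesis by (simp add: block_def)
qed

lemma prefix_block_0: "1 \<le> k \<Longrightarrow> prefix (block 0) (block k)"
  using power_increasing [of 1 k "4::nat"] by (simp add: block_0_eq prefix_block)

lemma not_prefix_block:
  assumes "1 \<le> i" "i < k"
  shows "\<not> prefix (block i) (block k)"
proof
  assume "prefix (block i) (block k)"
  then obtain zs where zs: "block k = block i @ zs" by (auto simp: prefix_def)
  have "(4::nat) ^ i < 4 ^ k" using assms(2) by simp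
  then have "(4::nat) ^ i - 1 < 4 ^ k - 1" using one_le_power [of "4::nat" i] by linarith
  then have "block k ! (4 ^ i - 1) = vtm (4 ^ i - 1)"
    using assms by (simp add: block_def nth_append)
  moreover have "block k ! (4 ^ i - 1) = block i ! (4 ^ i - 1)"
    using zs assms(1) by (simp add: nth_append length_block)
  ultimately show False
    using assms(1) vtm_pow4_minus_1 [of i] by (simp add: block_def nth_append)
qed

lemma suffix_block: "suffix [1] (block i)"
  by (auto simp: block_def suffix_def)

lemma first_block_neq_block: "[0] \<noteq> block i"
  by (simp add: block_def)

lemma removable_block_iff:
  assumes "x < y"
  shows "removable (last ([0] # map block xs)) (block x) (block y) \<longleftrightarrow> x = 0 \<or> xs \<noteq> []"
proof
  assume "removable (last ([0] # map block xs)) (block x) (block y)"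
  then obtain Q P where B: "block x = Q @ P" and P: "suffix P (last ([0] # map block xs))"
    and Q: "prefix Q (block y)" unfolding removable_def by blast
  show "x = 0 \<or> xs \<noteq> []"
  proof (rule ccontr)
    assume "\<not> ?thesis"
    then have "1 \<le> x" "xs = []" by simp_all
    \<comment> \<open>P is a suffix of the first block [0], but block x ends with 1.\<close>
    then have "P = []"
      using B P suffix_block [of x] by (auto simp: suffix_def Cons_eq_append_conv)
    then show False using B Q not_prefix_block [OF \<open>1 \<le> x\<close> assms] by simp
  qed
next
  assume x: "x = 0 \<or> xs \<noteq> []"
  show "removable (last ([0] # map block xs)) (block x) (block y)"
  proof (cases "x = 0")
    case True
    then show ?thesis using prefix_block_0 [of y] assms
      unfolding removable_def by (intro exI [of _ "block 0"] exI [of _ "[]"]) simp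
  next
    case False
    then have "block x = map vtm [0..<4 ^ x - 1] @ [1]" by (simp add: block_def)
    moreover have "prefix (map vtm [0..<4 ^ x - 1]) (block y)"
      using False assms by (intro prefix_block) (simp_all add: diff_le_mono)
    moreover have "suffix [1] (last ([0] # map block xs))"
      using False x suffix_block [of "last xs"] by (simp add: last_map)
    ultimately show ?thesis unfolding removable_def by blast
  qed
qed

lemma split_on_block_word: "split_on 3 (block_word xs) = [0] # map block xs"
proof -
  have "3 \<notin> set (block i)" for i using set_block [of i] by auto
  then show ?thesis unfolding block_word_def by (intro split_on_join_with) auto
qed

lemma inj_block_word: "inj block_word"
  by (rule injI) (metis split_on_block_word inj_block list.inject list.inj_map_strong injD)

lemma set_block_word: "set (block_word xs) \<subseteq> {0..<4}"
  using set_join_with [of 3 "[0] # map block xs"] set_block by (fastforce simp: block_word_def)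

lemma sq_step_block_word:
  assumes "xs2 \<noteq> []" "x < hd xs2" "x = 0 \<or> xs1 \<noteq> []"
  shows "sq_step (block_word (xs1 @ x # xs2)) (block_word (xs1 @ xs2))"
proof -
  have "removable (last ([0] # map block xs1)) (block x) (hd (map block xs2))"
    using assms removable_block_iff [OF assms(2)] by (simp add: hd_map)
  then have "sq_step (join_with 3 (([0] # map block xs1) @ block x # map block xs2))
      (join_with 3 (([0] # map block xs1) @ map block xs2))"
    using assms(1) by (intro sq_step_join_with_removable) simp_all
  then show ?thesis by (simp add: block_word_def)
qed

lemma sq_step_block_word_cases:
  assumes "sorted_wrt (<) xs" "sq_step (block_word xs) w"
  obtains xs1 x xs2 where "xs = xs1 @ x # xs2" "xs2 \<noteq> []" "x = 0 \<or> xs1 \<noteq> []"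
    "w = block_word (xs1 @ xs2)"
proof -
  have "distinct ([0] # map block xs)"
    using assms(1) inj_block first_block_neq_block
    by (auto simp: distinct_map strict_sorted_iff inj_on_def)
  moreover have "\<forall>b \<in> set ([0] # map block xs). 3 \<notin> set b"
    using set_block by fastforce
  moreover have "\<forall>b \<in> set ([0] # map block xs). square_free b"
    using square_free_block by (auto simp: square_free_def Cons_eq_append_conv)
  ultimately obtain bs1 B bs2 where bs: "[0] # map block xs = bs1 @ B # bs2"
    and "bs1 \<noteq> []" "bs2 \<noteq> []" and rem: "removable (last bs1) B (hd bs2)"
    and w: "w = join_with 3 (bs1 @ bs2)"
    using sq_step_join_with_cases assms(2) unfolding block_word_def by metis
  then obtain bs1' where "bs1 = [0] # bs1'" by (cases bs1) auto
  with bs obtain xs1 x xs2 where xs: "xs = xs1 @ x # xs2" and bs1: "bs1 = [0] # map block xs1"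
    and B: "B = block x" and bs2: "bs2 = map block xs2"
    by (auto simp: map_eq_append_conv)
  show ?thesis
  proof (rule that [OF xs])
    show "xs2 \<noteq> []" using \<open>bs2 \<noteq> []\<close> bs2 by simp
    then have "x < hd xs2" using assms(1) xs by (cases xs2) (simp_all add: sorted_wrt_append)
    then show "x = 0 \<or> xs1 \<noteq> []"
      using rem removable_block_iff [of x "hd xs2" xs1] \<open>xs2 \<noteq> []\<close>
      by (simp add: bs1 B bs2 hd_map)
    show "w = block_word (xs1 @ xs2)" using w by (simp add: block_word_def bs1 bs2)
  qed
qed

lemma square_free_block_word_iff:
  assumes "sorted_wrt (<) xs"
  shows "square_free (block_word xs) \<longleftrightarrow> length xs \<le> 1 \<or> (\<exists>i m. xs = [i, m] \<and> i \<noteq> 0)"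
proof
  assume sf: "square_free (block_word xs)"
  consider "length xs \<le> 1" | a b where "xs = [a, b]" | a b c ys where "xs = a # b # c # ys"
    by (cases xs; cases "tl xs"; cases "tl (tl xs)") auto
  then show "length xs \<le> 1 \<or> (\<exists>i m. xs = [i, m] \<and> i \<noteq> 0)"
  proof cases
    case (2 a b)
    have "a \<noteq> 0"
    proof
      assume "a = 0"
      then have "sq_step (block_word xs) (block_word [b])"
        using sq_step_block_word [of "[b]" a "[]"] assms 2 by simp
      with sf show False by (simp add: square_free_iff_no_sq_step)
    qed
    with 2 show ?thesis by simp
  next
    case (3 a b c ys)
    then have "sq_step (block_word xs) (block_word (a # c # ys))"
      using sq_step_block_word [of "c # ys" b "[a]"] assms by simp
    with sf show ?thesis by (simp add: square_free_iff_no_sq_step)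
  qed simp
next
  assume "length xs \<le> 1 \<or> (\<exists>i m. xs = [i, m] \<and> i \<noteq> 0)"
  then show "square_free (block_word xs)"
    unfolding square_free_iff_no_sq_step
    by (auto elim!: sq_step_block_word_cases [OF assms] simp: Cons_eq_append_conv append_eq_Cons_conv)
qed

lemma reachable_block_word:
  assumes "sq_step\<^sup>*\<^sup>* (block_word xs) w" "sorted_wrt (<) xs" "xs \<noteq> []"
  shows "\<exists>ys. w = block_word ys \<and> sorted_wrt (<) ys \<and> ys \<noteq> [] \<and> last ys = last xs"
  using assms(1)
proof (induction rule: rtranclp_induct)
  case base
  show ?case using assms(2,3) by blast
next
  case (step w w')
  then obtain ys where ys: "w = block_word ys" "sorted_wrt (<) ys" "ys \<noteq> []" "last ys = last xs"
    by blast
  obtain ys1 y ys2 where "ys = ys1 @ y # ys2" "ys2 \<noteq> []" "w' = block_word (ys1 @ ys2)"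
    using sq_step_block_word_cases [OF ys(2)] step.hyps(2) ys(1) by metis
  with ys show ?case by (auto simp: sorted_wrt_append)
qed

lemma sq_steps_delete_run:
  assumes "pre \<noteq> []" "\<forall>x \<in> set xs. x < k"
  shows "sq_step\<^sup>*\<^sup>* (block_word (pre @ xs @ k # post)) (block_word (pre @ k # post))"
  using assms(2)
proof (induction xs rule: rev_induct)
  case (snoc x xs)
  have "sq_step (block_word ((pre @ xs) @ x # k # post)) (block_word ((pre @ xs) @ k # post))"
    using snoc.prems assms(1) by (intro sq_step_block_word) simp_all
  with snoc show ?case by (simp add: converse_rtranclp_into_rtranclp)
qed simp

lemma sq_steps_drop_initial_segment:
  assumes "1 \<le> i"
  shows "sq_step\<^sup>*\<^sup>* (block_word ([0..<i] @ i # post)) (block_word (i # post))"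
proof -
  have "[0..<i] = [0] @ [1..<i]" using assms by (simp add: upt_conv_Cons)
  then have "sq_step\<^sup>*\<^sup>* (block_word ([0..<i] @ i # post)) (block_word ([0] @ i # post))"
    using sq_steps_delete_run [of "[0]" "[1..<i]" i post] by simp
  moreover have "sq_step (block_word ([] @ 0 # i # post)) (block_word ([] @ i # post))"
    using assms by (intro sq_step_block_word) simp_all
  ultimately show ?thesis by simp
qed

lemma sq_steps_upt_to_last:
  assumes "1 \<le> m"
  shows "sq_step\<^sup>*\<^sup>* (block_word [0..<Suc m]) (block_word [m])"
  using sq_steps_drop_initial_segment [OF assms, of "[]"] by simp

lemma sq_steps_upt_to_pair:
  assumes "1 \<le> i" "i < m"
  shows "sq_step\<^sup>*\<^sup>* (block_word [0..<Suc m]) (block_word [i, m])"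
proof -
  have "[0..<Suc m] = [0..<Suc i] @ [Suc i..<Suc m]"
    using upt_add_eq_append [of 0 "Suc i" "m - i"] assms by simp
  also have "[Suc i..<Suc m] = [Suc i..<m] @ [m]" using assms by simp
  finally have "[0..<Suc m] = [0..<Suc i] @ [Suc i..<m] @ [m]" by simp
  then have "sq_step\<^sup>*\<^sup>* (block_word [0..<Suc m]) (block_word ([0..<Suc i] @ [m]))"
    using sq_steps_delete_run [of "[0..<Suc i]" "[Suc i..<m]" m "[]"] by simp
  also have "[0..<Suc i] @ [m] = [0..<i] @ i # [m]" by simp
  finally show ?thesis
    using sq_steps_drop_initial_segment [OF assms(1), of "[m]"] by (meson rtranclp_trans)
qed

lemma reducts_block_word_upt:
  assumes "1 \<le> m"
  shows "reducts (block_word [0..<Suc m]) = block_word ` insert [m] ((\<lambda>i. [i, m]) ` {1..<m})"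
proof (intro equalityI subsetI)
  fix w assume "w \<in> reducts (block_word [0..<Suc m])"
  then have reach: "sq_step\<^sup>*\<^sup>* (block_word [0..<Suc m]) w" and sf: "square_free w"
    by (simp_all add: reducts_def)
  obtain ys where ys: "w = block_word ys" "sorted_wrt (<) ys" "ys \<noteq> []" "last ys = m"
    using reachable_block_word [OF reach sorted_wrt_upt] by auto
  then have "length ys \<le> 1 \<or> (\<exists>i m. ys = [i, m] \<and> i \<noteq> 0)"
    using sf square_free_block_word_iff by blast
  then have "ys = [m] \<or> (\<exists>i \<in> {1..<m}. ys = [i, m])"
    using ys(2-4) by (auto simp: le_Suc_eq length_Suc_conv)
  then show "w \<in> block_word ` insert [m] ((\<lambda>i. [i, m]) ` {1..<m})" using ys(1) by auto
next
  fix w assume "w \<in> block_word ` insert [m] ((\<lambda>i. [i, m]) ` {1..<m})"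
  then show "w \<in> reducts (block_word [0..<Suc m])"
    using assms sq_steps_upt_to_last sq_steps_upt_to_pair square_free_block_word_iff
    by (auto simp: reducts_def)
qed

lemma r_block_word_upt:
  assumes "1 \<le> m"
  shows "r (block_word [0..<Suc m]) = m"
proof -
  have "inj_on (\<lambda>i. [i, m]) {1..<m}" by (rule inj_onI) simp
  then have "card ((\<lambda>i. [i, m]) ` {1..<m}) = m - 1" by (simp add: card_image)
  moreover have "[m] \<notin> (\<lambda>i. [i, m]) ` {1..<m}" by auto
  ultimately have "card (insert [m] ((\<lambda>i. [i, m]) ` {1..<m})) = Suc (m - 1)" by simp
  with assms show ?thesis
    unfolding r_def reducts_block_word_upt [OF assms]
      card_image [OF inj_on_subset [OF inj_block_word subset_UNIV]] by simp
qed

theorem theorem2p7: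
  fixes k :: nat
  assumes "k \<ge> 1"
  shows "\<exists>W :: nat list. set W \<subseteq> {0..<4} \<and> r W = k"
  using set_block_word r_block_word_upt [OF assms] by blast

end
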